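(* Let $M(t)\in\mathbb{R}^{n\times n}$ be symmetric and satisfy the Gram flow $\dot M=-(M\Phi+\Phi M)$, where $\Phi(t)$ is symmetric. Suppose that on the time interval considered $M(t)=\sum_e\lambda_e(t)E_e(t)$ is its spectral decomposition, with the eigenvalues $\lambda_e(t)$ remaining distinct (isolated) and the orthogonal spectral projectors $E_e(t)$ differentiable. Then for each $e$, $$\dot E_e=\sum_{f\neq e}\frac{\lambda_e+\lambda_f}{\lambda_f-\lambda_e}\big(E_e\Phi E_f+E_f\Phi E_e\big).$$ *)

theory Defs
  imports "HOL-Analysis.Analysis"
begin

end

theory Submission
  imports Defs
begin

text \<open>
  Differentiating \<open>E\<^sub>e\<^sup>2 = E\<^sub>e\<close> shows that \<open>E\<^sub>e'\<close> is block off-diagonal with respect to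
  \<open>E\<^sub>e\<close> and \<open>1 - E\<^sub>e = (\<Sum>f\<noteq>e. E\<^sub>f)\<close>, so only the blocks \<open>E\<^sub>e E\<^sub>e' E\<^sub>f\<close> and \<open>E\<^sub>f E\<^sub>e' E\<^sub>e\<close>
  (\<open>f \<noteq> e\<close>) matter, and for these both \<open>E\<^sub>e E\<^sub>f\<close> and \<open>E\<^sub>e M E\<^sub>f\<close> vanish identically.
  Differentiating them, compressing by \<open>E\<^sub>e\<close> on the left and \<open>E\<^sub>f\<close> on the right and using
  \<open>E\<^sub>e M = \<lambda>\<^sub>e E\<^sub>e\<close>, \<open>M E\<^sub>f = \<lambda>\<^sub>f E\<^sub>f\<close> gives
  \<open>(\<lambda>\<^sub>f - \<lambda>\<^sub>e) E\<^sub>e E\<^sub>e' E\<^sub>f = (\<lambda>\<^sub>e + \<lambda>\<^sub>f) E\<^sub>e \<Phi> E\<^sub>f\<close>.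
\<close>

lemma bounded_bilinear_matrix_matrix_mult:
  "bounded_bilinear ((**) :: real^'n^'m \<Rightarrow> real^'p^'n \<Rightarrow> real^'p^'m)"
proof -
  have "bilinear ((**) :: real^'n^'m \<Rightarrow> real^'p^'n \<Rightarrow> real^'p^'m)"
    unfolding bilinear_def linear_iff
    by (auto simp: vec_eq_iff matrix_matrix_mult_def sum.distrib sum_distrib_left algebra_simps)
  then show ?thesis
    by (simp add: bilinear_conv_bounded_bilinear)
qed

interpretation matrix_mult: bounded_bilinear "(**) :: real^'n^'m \<Rightarrow> real^'p^'n \<Rightarrow> real^'p^'m"
  by (rule bounded_bilinear_matrix_matrix_mult)

lemmas matrix_mult_linear_simps = matrix_mul_assoc
  matrix_mult.add_left matrix_mult.add_right matrix_mult.diff_left matrix_mult.diff_right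
  matrix_mult.minus_left matrix_mult.minus_right matrix_mult.scaleR_left matrix_mult.scaleR_right
  matrix_mult.zero_left matrix_mult.zero_right

lemma has_vector_derivative_unique_on_open:
  assumes "(f has_vector_derivative f') (at t)" and "(g has_vector_derivative g') (at t)"
    and "open T" and "t \<in> T" and "\<And>s. s \<in> T \<Longrightarrow> f s = g s"
  shows "f' = g'"
  using has_vector_derivative_transform_within_open[OF assms(1,3,4,5)] assms(2)
  by (rule vector_derivative_unique_at)

lemma spectral_sum_mult_projection:
  fixes E :: "'k \<Rightarrow> real^'n^'n"
  assumes "finite K" and "f \<in> K" and "E f ** E f = E f"
    and "\<And>e g. e \<in> K \<Longrightarrow> g \<in> K \<Longrightarrow> e \<noteq> g \<Longrightarrow> E e ** E g = 0"
  shows "(\<Sum>e\<in>K. lam e *\<^sub>R E e) ** E f = lam f *\<^sub>R E f"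
    and "E f ** (\<Sum>e\<in>K. lam e *\<^sub>R E e) = lam f *\<^sub>R E f"
proof -
  have "E e ** E f = 0" "E f ** E e = 0" if "e \<in> K - {f}" for e
    using assms(2,4) that by auto
  then show "(\<Sum>e\<in>K. lam e *\<^sub>R E e) ** E f = lam f *\<^sub>R E f"
    and "E f ** (\<Sum>e\<in>K. lam e *\<^sub>R E e) = lam f *\<^sub>R E f"
    by (simp_all add: matrix_mult.sum_left matrix_mult.sum_right matrix_mult_linear_simps
        sum.remove[OF assms(1,2)] assms(3))
qed

lemma idempotent_tangent_off_diagonal:
  fixes P D :: "real^'n^'n"
  assumes idem: "P ** P = P" and tangent: "P ** D + D ** P = D"
  shows "D = P ** D ** (mat 1 - P) + (mat 1 - P) ** D ** P"
proof -
  have "P ** (P ** D + D ** P) ** P = P ** D ** P"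
    using tangent by simp
  then have "P ** D ** P = 0"
    by (simp add: matrix_mult_linear_simps idem flip: matrix_mul_assoc[of _ P P])
  then show ?thesis
    by (simp add: matrix_mult_linear_simps idem tangent flip: matrix_mul_assoc[of _ P P])
qed

lemma idempotent_path_derivative_off_diagonal:
  fixes P :: "real \<Rightarrow> real^'n^'n"
  assumes "open T" and "t \<in> T" and P': "(P has_vector_derivative DP) (at t)"
    and idem: "\<And>s. s \<in> T \<Longrightarrow> P s ** P s = P s"
  shows "DP = P t ** DP ** (mat 1 - P t) + (mat 1 - P t) ** DP ** P t"
proof (rule idempotent_tangent_off_diagonal)
  show "P t ** P t = P t"
    using idem \<open>t \<in> T\<close> .
  show "P t ** DP + DP ** P t = DP"
    using has_vector_derivative_unique_on_open[OF matrix_mult.has_vector_derivative[OF P' P'] P'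
        \<open>open T\<close> \<open>t \<in> T\<close>] idem by blast
qed

lemma gram_flow_tangent_block:
  fixes P Q DP DQ M Phi :: "real^'n^'n"
  assumes idem: "P ** P = P" "Q ** Q = Q"
    and eig: "P ** M = a *\<^sub>R P" "M ** Q = b *\<^sub>R Q" and "a \<noteq> b"
    and orth_tangent: "P ** DQ + DP ** Q = 0"
    and block_tangent: "P ** M ** DQ + (P ** - (M ** Phi + Phi ** M) + DP ** M) ** Q = 0"
  shows "P ** DP ** Q = ((a + b) / (b - a)) *\<^sub>R (P ** Phi ** Q)"
    and "P ** DQ ** Q = ((a + b) / (a - b)) *\<^sub>R (P ** Phi ** Q)"
proof -
  have eig': "X ** P ** M = a *\<^sub>R (X ** P)" "X ** M ** Q = b *\<^sub>R (X ** Q)"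
    for X :: "real^'n^'n"
    by (simp_all add: eig matrix_mult.scaleR_right flip: matrix_mul_assoc)
  have idem': "X ** P ** P = X ** P" "X ** Q ** Q = X ** Q" for X :: "real^'n^'n"
    by (simp_all add: idem flip: matrix_mul_assoc)
  note simps = matrix_mult_linear_simps idem idem' eig eig'
  have "P ** (P ** DQ + DP ** Q) ** Q = 0"
    using orth_tangent by simp
  then have DQ: "P ** DQ ** Q = - (P ** DP ** Q)"
    by (simp add: simps eq_neg_iff_add_eq_0 add.commute)
  have "P ** (P ** M ** DQ + (P ** - (M ** Phi + Phi ** M) + DP ** M) ** Q) ** Q = 0"
    using block_tangent by simp
  then have "(b - a) *\<^sub>R (P ** DP ** Q) = (a + b) *\<^sub>R (P ** Phi ** Q)"
    by (simp add: simps DQ algebra_simps)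
  then have "inverse (b - a) *\<^sub>R ((b - a) *\<^sub>R (P ** DP ** Q)) =
      ((a + b) / (b - a)) *\<^sub>R (P ** Phi ** Q)"
    by (simp add: divide_inverse_commute)
  with \<open>a \<noteq> b\<close> show "P ** DP ** Q = ((a + b) / (b - a)) *\<^sub>R (P ** Phi ** Q)"
    by simp
  moreover have "(a + b) / (a - b) = - ((a + b) / (b - a))"
    by (simp add: minus_divide_right)
  ultimately show "P ** DQ ** Q = ((a + b) / (a - b)) *\<^sub>R (P ** Phi ** Q)"
    using DQ by simp
qed

lemma gram_flow_projection_derivative_block:
  fixes P Q M Phi :: "real \<Rightarrow> real^'n^'n"
  assumes "open T" and "t \<in> T"
    and P': "(P has_vector_derivative DP) (at t)" and Q': "(Q has_vector_derivative DQ) (at t)"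
    and M': "(M has_vector_derivative - (M t ** Phi t + Phi t ** M t)) (at t)"
    and "P t ** P t = P t" and "Q t ** Q t = Q t"
    and "P t ** M t = a *\<^sub>R P t" and "M t ** Q t = b *\<^sub>R Q t" and "a \<noteq> b"
    and orth: "\<And>s. s \<in> T \<Longrightarrow> P s ** Q s = 0"
    and block: "\<And>s. s \<in> T \<Longrightarrow> P s ** M s ** Q s = 0"
  shows "P t ** DP ** Q t = ((a + b) / (b - a)) *\<^sub>R (P t ** Phi t ** Q t)"
    and "P t ** DQ ** Q t = ((a + b) / (a - b)) *\<^sub>R (P t ** Phi t ** Q t)"
proof -
  note vanishing_derivative = has_vector_derivative_unique_on_open[where g = "\<lambda>_. 0",
      OF _ has_vector_derivative_const \<open>open T\<close> \<open>t \<in> T\<close>]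
  have "P t ** DQ + DP ** Q t = 0"
    using vanishing_derivative[OF matrix_mult.has_vector_derivative[OF P' Q']] orth by blast
  moreover have "P t ** M t ** DQ + (P t ** - (M t ** Phi t + Phi t ** M t) + DP ** M t) ** Q t = 0"
    using vanishing_derivative[OF matrix_mult.has_vector_derivative[OF
          matrix_mult.has_vector_derivative[OF P' M'] Q']] block by blast
  ultimately show "P t ** DP ** Q t = ((a + b) / (b - a)) *\<^sub>R (P t ** Phi t ** Q t)"
    and "P t ** DQ ** Q t = ((a + b) / (a - b)) *\<^sub>R (P t ** Phi t ** Q t)"
    using gram_flow_tangent_block[OF assms(6-10)] by simp_all
qed

theorem corollary7:
  fixes M Phi :: "real \<Rightarrow> real^'n^'n"
    and T :: "real set"
    and K :: "'k set"
    and lam :: "'k \<Rightarrow> real \<Rightarrow> real"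
    and E :: "'k \<Rightarrow> real \<Rightarrow> real^'n^'n"
    and E' :: "'k \<Rightarrow> real \<Rightarrow> real^'n^'n"
  assumes T_open: "open T"
    and M_sym: "\<And>t. t \<in> T \<Longrightarrow> transpose (M t) = M t"
    and Phi_sym: "\<And>t. t \<in> T \<Longrightarrow> transpose (Phi t) = Phi t"
    and gram_flow: "\<And>t. t \<in> T \<Longrightarrow>
        (M has_vector_derivative (- (M t ** Phi t + Phi t ** M t))) (at t)"
    and K_fin: "finite K"
    and E_nonzero: "\<And>t e. t \<in> T \<Longrightarrow> e \<in> K \<Longrightarrow> E e t \<noteq> 0"
    and E_sym: "\<And>t e. t \<in> T \<Longrightarrow> e \<in> K \<Longrightarrow> transpose (E e t) = E e t"
    and E_idem: "\<And>t e. t \<in> T \<Longrightarrow> e \<in> K \<Longrightarrow> E e t ** E e t = E e t"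
    and E_orth: "\<And>t e f. t \<in> T \<Longrightarrow> e \<in> K \<Longrightarrow> f \<in> K \<Longrightarrow> e \<noteq> f \<Longrightarrow>
        E e t ** E f t = 0"
    and E_complete: "\<And>t. t \<in> T \<Longrightarrow> (\<Sum>e\<in>K. E e t) = mat 1"
    and spectral: "\<And>t. t \<in> T \<Longrightarrow> M t = (\<Sum>e\<in>K. lam e t *\<^sub>R E e t)"
    and distinct_eig: "\<And>t e f. t \<in> T \<Longrightarrow> e \<in> K \<Longrightarrow> f \<in> K \<Longrightarrow> e \<noteq> f \<Longrightarrow>
        lam e t \<noteq> lam f t"
    and E_deriv: "\<And>t e. t \<in> T \<Longrightarrow> e \<in> K \<Longrightarrow>
        (E e has_vector_derivative E' e t) (at t)"
  shows "\<And>t e. t \<in> T \<Longrightarrow> e \<in> K \<Longrightarrow>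
     E' e t = (\<Sum>f\<in>K - {e}. ((lam e t + lam f t) / (lam f t - lam e t)) *\<^sub>R
                 (E e t ** Phi t ** E f t + E f t ** Phi t ** E e t))"
proof -
  fix t e assume t: "t \<in> T" and e: "e \<in> K"
  have eig: "M s ** E f s = lam f s *\<^sub>R E f s" "E f s ** M s = lam f s *\<^sub>R E f s"
    if "s \<in> T" "f \<in> K" for s f
    using spectral_sum_mult_projection[of K f "\<lambda>g. E g s"] K_fin E_idem E_orth spectral that
    by simp_all
  have block: "E g t ** E' g t ** E f t =
        ((lam g t + lam f t) / (lam f t - lam g t)) *\<^sub>R (E g t ** Phi t ** E f t)"
      "E g t ** E' f t ** E f t =
        ((lam g t + lam f t) / (lam g t - lam f t)) *\<^sub>R (E g t ** Phi t ** E f t)"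
    if "g \<in> K" "f \<in> K" "g \<noteq> f" for g f
    using gram_flow_projection_derivative_block[where Phi = Phi, OF T_open t
        E_deriv[OF t that(1)] E_deriv[OF t that(2)] gram_flow[OF t]
        E_idem[OF t that(1)] E_idem[OF t that(2)] eig(2)[OF t that(1)] eig(1)[OF t that(2)]
        distinct_eig[OF t that]]
    by (simp_all add: E_orth eig that matrix_mult.scaleR_left)
  have complement: "(\<Sum>f\<in>K - {e}. E f t) = mat 1 - E e t"
    using E_complete[OF t] sum.remove[OF K_fin e, of "\<lambda>f. E f t"] by (simp add: algebra_simps)
  have "E' e t = E e t ** E' e t ** (mat 1 - E e t) + (mat 1 - E e t) ** E' e t ** E e t"
    by (rule idempotent_path_derivative_off_diagonal[OF T_open t E_deriv[OF t e]])
      (simp add: E_idem e)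
  also have "\<dots> = (\<Sum>f\<in>K - {e}. E e t ** E' e t ** E f t + E f t ** E' e t ** E e t)"
    by (simp add: complement[symmetric] matrix_mult.sum_left matrix_mult.sum_right sum.distrib)
  also have "\<dots> = (\<Sum>f\<in>K - {e}. ((lam e t + lam f t) / (lam f t - lam e t)) *\<^sub>R
                 (E e t ** Phi t ** E f t + E f t ** Phi t ** E e t))"
    using e by (intro sum.cong) (auto simp: block scaleR_add_right add.commute)
  finally show "E' e t = (\<Sum>f\<in>K - {e}. ((lam e t + lam f t) / (lam f t - lam e t)) *\<^sub>R
                 (E e t ** Phi t ** E f t + E f t ** Phi t ** E e t))" .
qed

end
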